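(* Let $R$ be a finite semiring with $0$ and $1$, let $M\in\mathrm{Mat}_m(R)$, and suppose the preperiod $\mathrm{pr}(M)$ exists. Let $n\ge1$, let $b_0,\dots,b_{n-1}\in\mathbb{N}$ be such that the integer circulant matrix $B=\mathrm{Circ}(b_0,\dots,b_{n-1})$ satisfies $\det(B)\neq 0$, and let $v=(M^{b_0},\dots,M^{b_{n-1}})$. Let $A=\mathrm{Circ}(a_0,\dots,a_{n-1})\in\mathrm{Circ}_n(\mathbb{N})$ satisfy $$\sum_{i=0}^{n-1} a_i\, b_{i+k}\le \mathrm{pr}(M)-1\quad\text{for every }k=0,\dots,n-1$$ (indices modulo $n$). Then for $X\in\mathrm{Circ}_n(\mathbb{N})$, $Xv=Av$ holds if and only if $X=A$.
   Context: $\mathrm{Circ}(c_0,\dots,c_{n-1})$ denotes the $n\times n$ matrix with $(i,j)$ entry $c_{(i-j)\bmod n}$ ($0\le i,j\le n-1$), and $\mathrm{Circ}_n(\mathbb{N})$ is the set of such matrices with entries in $\mathbb{N}=\{0,1,2,\dots\}$. For $C=\mathrm{Circ}(c_0,\dots,c_{n-1})\in\mathrm{Circ}_n(\mathbb{N})$ and a tuple $w=(w_0,\dots,w_{n-1})$ of pairwise commuting elements of a monoid, $Cw$ is the tuple with $(Cw)_i=\prod_{j=0}^{n-1} w_j^{\,c_{j-i}}$ (indices mod $n$, $w^0$ the identity); here the entries of $v$ are powers of $M$, hence commute. A semiring is a set with two associative operations $+,\cdot$, $\cdot$ distributing over $+$ on both sides; $R$ is additively commutative with $0$ and $1$. For $g$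 in a finite monoid, the preperiod $\mathrm{pr}(g)$ is the largest non-negative integer $m$ such that $g^k\neq g^m$ for all $k>m$ (exponents in $\mathbb{N}$); "exists" means such an $m$ exists. *)

theory Defs
  imports "Jordan_Normal_Form.Determinant"
begin

text \<open>Preperiod of an element given by its power sequence pw k = g^k.
  p is a candidate iff g^k differs from g^p for all k > p; the preperiod is the
  largest candidate, and it exists iff a largest candidate exists.\<close>

definition pr_cand :: "(nat \<Rightarrow> 'b) \<Rightarrow> nat \<Rightarrow> bool" where
  "pr_cand pw p \<longleftrightarrow> (\<forall>k>p. pw k \<noteq> pw p)"

definition pr_exists :: "(nat \<Rightarrow> 'b) \<Rightarrow> bool" where
  "pr_exists pw \<longleftrightarrow> (\<exists>p. pr_cand pw p \<and> (\<forall>q. pr_cand pw q \<longrightarrow> q \<le> p))"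

definition preperiod :: "(nat \<Rightarrow> 'b) \<Rightarrow> nat" where
  "preperiod pw = (GREATEST p. pr_cand pw p)"

definition circ_int_mat :: "nat \<Rightarrow> (nat \<Rightarrow> nat) \<Rightarrow> int mat" where
  "circ_int_mat n c = mat n n (\<lambda>(i,j). int (c ((i + n - j) mod n)))"

fun prod_mat_upto :: "nat \<Rightarrow> (nat \<Rightarrow> 'a::semiring_1 mat) \<Rightarrow> nat \<Rightarrow> 'a mat" where
  "prod_mat_upto m f 0 = 1\<^sub>m m"
| "prod_mat_upto m f (Suc k) = prod_mat_upto m f k * f k"

text \<open>Action of Circ(c_0,...,c_{n-1}) on a tuple w of m x m matrices:
  (Cw)_i = prod_{j=0}^{n-1} w_j ^ c_{(j-i) mod n}.\<close>

definition circ_act :: "nat \<Rightarrow> nat \<Rightarrow> (nat \<Rightarrow> nat) \<Rightarrow> (nat \<Rightarrow> 'a::semiring_1 mat) \<Rightarrow> nat \<Rightarrow> 'a mat" where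
  "circ_act m n c w i = prod_mat_upto m (\<lambda>j. w j ^\<^sub>m c ((j + n - i) mod n)) n"

end

theory Submission
  imports Defs
begin

text \<open>Every entry of \<open>Cv\<close> is a power of \<open>M\<close>, namely \<open>(Cv)\<^sub>i = M ^ (\<Sum>l. c l * b (l + i))\<close>.
  Below the preperiod the map \<open>k \<mapsto> M ^ k\<close> is injective, and the hypothesis keeps the
  exponents of \<open>Av\<close> below it; so \<open>Xv = Av\<close> forces \<open>\<Sum>l. (x l - a l) * b (l + i) = 0\<close> for
  all \<open>i\<close>. After reflecting the index of \<open>x - a\<close> this is the linear system with matrix
  \<open>Circ(b)\<close>, hence \<open>x = a\<close> since \<open>det Circ(b) \<noteq> 0\<close>.\<close>

lemma pow_mat_add:
  assumes "M \<in> carrier_mat m m"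
  shows "M ^\<^sub>m (j + k) = M ^\<^sub>m j * M ^\<^sub>m k"
proof (induction k)
  case (Suc k)
  then show ?case using assms by (simp add: assoc_mult_mat[of _ m m _ m _ m])
qed (use assms in simp)

lemma pow_mat_mult:
  assumes "M \<in> carrier_mat m m"
  shows "(M ^\<^sub>m j) ^\<^sub>m k = M ^\<^sub>m (j * k)"
proof (induction k)
  case (Suc k)
  then show ?case using pow_mat_add[OF assms, of "j * k" j] by (simp add: add.commute)
qed (use assms in simp)

lemma pow_mat_eq_shift:
  assumes "M \<in> carrier_mat m m" and "M ^\<^sub>m j = M ^\<^sub>m k"
  shows "M ^\<^sub>m (j + d) = M ^\<^sub>m (k + d)"
  using assms by (simp add: pow_mat_add)

lemma pr_cand_downward:
  assumes shift: "\<And>j k d. pw j = pw k \<Longrightarrow> pw (j + d) = pw (k + d)"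
    and "pr_cand pw p" and "q \<le> p"
  shows "pr_cand pw q"
  unfolding pr_cand_def
proof (intro allI impI notI)
  fix k assume "k > q" and "pw k = pw q"
  then have "pw (p + (k - q)) = pw p"
    using shift[of k q "p - q"] \<open>q \<le> p\<close> by (simp add: add.commute)
  moreover have "p + (k - q) > p" using \<open>k > q\<close> by simp
  ultimately show False using \<open>pr_cand pw p\<close> unfolding pr_cand_def by blast
qed

lemma pr_cand_preperiod:
  assumes "pr_exists pw"
  shows "pr_cand pw (preperiod pw)"
proof -
  obtain p where "pr_cand pw p" and "\<forall>q. pr_cand pw q \<longrightarrow> q \<le> p"
    using assms unfolding pr_exists_def by blast
  then have "preperiod pw = p"
    unfolding preperiod_def by (intro Greatest_equality) auto
  with \<open>pr_cand pw p\<close> show ?thesis by simp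
qed

lemma eq_if_eq_power_below_preperiod:
  assumes shift: "\<And>j k d. pw j = pw k \<Longrightarrow> pw (j + d) = pw (k + d)"
    and "pr_exists pw" and "s \<le> preperiod pw" and "pw t = pw s"
  shows "t = s"
proof (rule linorder_cases[of t s])
  assume "t < s"
  have "pr_cand pw t"
    using pr_cand_downward[OF shift pr_cand_preperiod[OF \<open>pr_exists pw\<close>]] \<open>t < s\<close> assms(3)
    by simp
  with \<open>t < s\<close> \<open>pw t = pw s\<close> show ?thesis unfolding pr_cand_def by metis
next
  assume "s < t"
  have "pr_cand pw s"
    by (rule pr_cand_downward[OF shift pr_cand_preperiod[OF \<open>pr_exists pw\<close>] assms(3)])
  with \<open>s < t\<close> \<open>pw t = pw s\<close> show ?thesis unfolding pr_cand_def by metis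
qed

lemma prod_mat_upto_pow_mat:
  assumes "M \<in> carrier_mat m m"
  shows "prod_mat_upto m (\<lambda>j. (M ^\<^sub>m b j) ^\<^sub>m c j) k = M ^\<^sub>m (\<Sum>j<k. b j * c j)"
proof (induction k)
  case (Suc k)
  then show ?case using assms by (simp add: pow_mat_mult pow_mat_add)
qed (use assms in simp)

lemma sum_lessThan_rotate:
  assumes "i < (n::nat)"
  shows "(\<Sum>j<n. g j) = (\<Sum>l<n. g ((l + i) mod n))"
proof -
  have "bij_betw (\<lambda>l. (l + i) mod n) {..<n} {..<n}"
    by (rule bij_betw_byWitness[where f'="\<lambda>j. (j + n - i) mod n"])
      (use assms in \<open>auto simp: mod_if\<close>)
  from sum.reindex_bij_betw[OF this, of g] show ?thesis by simp
qed

lemma sum_lessThan_reflect: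
  "(\<Sum>j<(n::nat). g j) = (\<Sum>l<n. g ((n - l) mod n))"
proof -
  have "bij_betw (\<lambda>l. (n - l) mod n) {..<n} {..<n}"
    by (rule bij_betw_byWitness[where f'="\<lambda>l. (n - l) mod n"]) (auto simp: mod_if)
  from sum.reindex_bij_betw[OF this, of g] show ?thesis by simp
qed

lemma circ_act_pow_mat:
  assumes "M \<in> carrier_mat m m" and "i < n"
  shows "circ_act m n c (\<lambda>j. M ^\<^sub>m b j) i = M ^\<^sub>m (\<Sum>l<n. c l * b ((l + i) mod n))"
proof -
  have "circ_act m n c (\<lambda>j. M ^\<^sub>m b j) i = M ^\<^sub>m (\<Sum>j<n. b j * c ((j + n - i) mod n))"
    unfolding circ_act_def by (rule prod_mat_upto_pow_mat[OF assms(1)])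
  also have "(\<Sum>j<n. b j * c ((j + n - i) mod n))
      = (\<Sum>l<n. b ((l + i) mod n) * c (((l + i) mod n + n - i) mod n))"
    by (rule sum_lessThan_rotate[OF \<open>i < n\<close>])
  also have "\<dots> = (\<Sum>l<n. c l * b ((l + i) mod n))"
    by (rule sum.cong) (use \<open>i < n\<close> in \<open>auto simp: mod_if\<close>)
  finally show ?thesis .
qed

lemma circ_int_mat_mult_reflected_vec:
  "circ_int_mat n b *\<^sub>v vec n (\<lambda>j. y ((n - j) mod n))
     = vec n (\<lambda>i. \<Sum>l<n. y l * int (b ((l + i) mod n)))"
proof (rule eq_vecI)
  fix i assume "i < dim_vec (vec n (\<lambda>i. \<Sum>l<n. y l * int (b ((l + i) mod n))))"
  then have i: "i < n" by simp
  have "(circ_int_mat n b *\<^sub>v vec n (\<lambda>j. y ((n - j) mod n))) $ i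
      = (\<Sum>j<n. int (b ((i + n - j) mod n)) * y ((n - j) mod n))"
    using i by (simp add: circ_int_mat_def mult_mat_vec_def scalar_prod_def lessThan_atLeast0)
  also have "\<dots> = (\<Sum>l<n. int (b ((i + n - (n - l) mod n) mod n)) * y ((n - (n - l) mod n) mod n))"
    by (rule sum_lessThan_reflect)
  also have "\<dots> = (\<Sum>l<n. y l * int (b ((l + i) mod n)))"
  proof (rule sum.cong)
    fix l assume "l \<in> {..<n}"
    then have "(n - (n - l) mod n) mod n = l" and "(i + n - (n - l) mod n) mod n = (l + i) mod n"
      using i by (auto simp: mod_if)
    then show "int (b ((i + n - (n - l) mod n) mod n)) * y ((n - (n - l) mod n) mod n)
        = y l * int (b ((l + i) mod n))"
      by simp
  qed simp
  finally show "(circ_int_mat n b *\<^sub>v vec n (\<lambda>j. y ((n - j) mod n))) $ i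
      = vec n (\<lambda>i. \<Sum>l<n. y l * int (b ((l + i) mod n))) $ i"
    using i by simp
qed (simp add: circ_int_mat_def)

lemma circ_correlation_inj:
  assumes "det (circ_int_mat n b) \<noteq> 0"
    and "\<forall>i<n. (\<Sum>l<n. x l * b ((l + i) mod n)) = (\<Sum>l<n. a l * b ((l + i) mod n))"
  shows "\<forall>l<n. x l = a l"
proof -
  define y where "y l = int (x l) - int (a l)" for l
  define z where "z = vec n (\<lambda>j. y ((n - j) mod n))"
  have "circ_int_mat n b *\<^sub>v z = 0\<^sub>v n"
  proof -
    have "(\<Sum>l<n. y l * int (b ((l + i) mod n))) = 0" if "i < n" for i
    proof -
      have "int (\<Sum>l<n. x l * b ((l + i) mod n)) = int (\<Sum>l<n. a l * b ((l + i) mod n))"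
        using assms(2) that by presburger
      then show ?thesis by (simp add: y_def left_diff_distrib sum_subtractf)
    qed
    then show ?thesis unfolding z_def circ_int_mat_mult_reflected_vec by auto
  qed
  moreover have "circ_int_mat n b \<in> carrier_mat n n" by (simp add: circ_int_mat_def)
  moreover have "z \<in> carrier_vec n" by (simp add: z_def)
  ultimately have "z = 0\<^sub>v n"
    using det_0_iff_vec_prod_zero assms(1) by blast
  show ?thesis
  proof (intro allI impI)
    fix l assume "l < n"
    then have "(n - (n - l) mod n) mod n = l" and "(n - l) mod n < n" by (auto simp: mod_if)
    then have "y l = z $ ((n - l) mod n)" unfolding z_def by simp
    with \<open>z = 0\<^sub>v n\<close> \<open>(n - l) mod n < n\<close> show "x l = a l" by (simp add: y_def)
  qed
qed

theorem mainTheorem6: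
  fixes M :: "'a::{semiring_1, finite} mat"
    and m n :: nat and a b x :: "nat \<Rightarrow> nat"
  assumes "M \<in> carrier_mat m m"
    and "pr_exists (\<lambda>k. M ^\<^sub>m k)"
    and "n \<ge> 1"
    and "det (circ_int_mat n b) \<noteq> 0"
    and "\<forall>k<n. int (\<Sum>i<n. a i * b ((i + k) mod n)) \<le> int (preperiod (\<lambda>k. M ^\<^sub>m k)) - 1"
  shows "(\<forall>i<n. circ_act m n x (\<lambda>j. M ^\<^sub>m b j) i = circ_act m n a (\<lambda>j. M ^\<^sub>m b j) i)
         \<longleftrightarrow> (\<forall>i<n. x i = a i)"
proof
  assume act_eq: "\<forall>i<n. circ_act m n x (\<lambda>j. M ^\<^sub>m b j) i = circ_act m n a (\<lambda>j. M ^\<^sub>m b j) i"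
  have "(\<Sum>l<n. x l * b ((l + i) mod n)) = (\<Sum>l<n. a l * b ((l + i) mod n))" if "i < n" for i
  proof (rule eq_if_eq_power_below_preperiod[where pw = "\<lambda>k. M ^\<^sub>m k"])
    show "M ^\<^sub>m j = M ^\<^sub>m k \<Longrightarrow> M ^\<^sub>m (j + d) = M ^\<^sub>m (k + d)" for j k d
      by (rule pow_mat_eq_shift[OF assms(1)])
    have "int (\<Sum>l<n. a l * b ((l + i) mod n)) \<le> int (preperiod (\<lambda>k. M ^\<^sub>m k)) - 1"
      using assms(5) \<open>i < n\<close> by blast
    then show "(\<Sum>l<n. a l * b ((l + i) mod n)) \<le> preperiod (\<lambda>k. M ^\<^sub>m k)"
      by linarith
    show "M ^\<^sub>m (\<Sum>l<n. x l * b ((l + i) mod n)) = M ^\<^sub>m (\<Sum>l<n. a l * b ((l + i) mod n))"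
      using act_eq \<open>i < n\<close> by (simp add: circ_act_pow_mat[OF assms(1)])
  qed (rule assms(2))
  then show "\<forall>i<n. x i = a i" using circ_correlation_inj[OF assms(4)] by blast
qed (simp add: circ_act_pow_mat[OF assms(1)])

end
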